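(* Let $m\ge4$ be an integer. There is $\epsilon_0>0$ such that for every $s_0>0$ and every $\xi\in X^2$ with $\|\xi\|_{X^2}\le\epsilon_0$, there exist $s=s(\xi,s_0)>0$ and $\tilde\xi\in X^2$ with $$Q^{s_0}+\xi=Q^s+\tilde\xi,\qquad(\tilde\xi,h^s)_{L^2(r\,dr)}=0,\qquad\Big|\frac{s}{s_0}-1\Big|+\|\tilde\xi\|_{X^2}\lesssim\|\xi\|_{X^2}.$$
   Context: $Q(r)=\pi-2\arctan(r^m)$, $h(r)=\sin Q(r)=\frac{2r^m}{1+r^{2m}}$, $Q^s(r)=Q(r/s)$, $h^s(r)=h(r/s)$. $\|w\|_{X^2}^2=\int_0^\infty(w_r^2+m^2\frac{w^2}{r^2})r\,dr$, and $(f,g)_{L^2(r\,dr)}=\int_0^\infty fg\,r\,dr$. The implicit constant depends only on $m$. *)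

theory Defs
  imports "HOL-Analysis.Analysis"
begin

definition Qm :: "nat \<Rightarrow> real \<Rightarrow> real" where
  "Qm m r = pi - 2 * arctan (r ^ m)"

definition hm :: "nat \<Rightarrow> real \<Rightarrow> real" where
  "hm m r = 2 * r ^ m / (1 + r ^ (2 * m))"

definition Qs :: "nat \<Rightarrow> real \<Rightarrow> real \<Rightarrow> real" where
  "Qs m s r = Qm m (r / s)"

definition hs :: "nat \<Rightarrow> real \<Rightarrow> real \<Rightarrow> real" where
  "hs m s r = hm m (r / s)"

text \<open>w' is a weak derivative of w on (0,oo) (w locally absolutely continuous
  with derivative w'), and the X^2 energy is finite.\<close>
definition X2_deriv :: "nat \<Rightarrow> (real \<Rightarrow> real) \<Rightarrow> (real \<Rightarrow> real) \<Rightarrow> bool" where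
  "X2_deriv m w w' \<longleftrightarrow>
     (\<forall>a b. 0 < a \<longrightarrow> a \<le> b \<longrightarrow>
        set_integrable lborel {a..b} w' \<and> w b - w a = (LINT r:{a..b}|lborel. w' r)) \<and>
     set_integrable lborel {0<..} (\<lambda>r. ((w' r)\<^sup>2 + (real m)\<^sup>2 * (w r)\<^sup>2 / r\<^sup>2) * r)"

definition inX2 :: "nat \<Rightarrow> (real \<Rightarrow> real) \<Rightarrow> bool" where
  "inX2 m w \<longleftrightarrow> (\<exists>w'. X2_deriv m w w')"

text \<open>The norm; the weak derivative is unique a.e., so the choice is irrelevant.\<close>
definition X2_norm :: "nat \<Rightarrow> (real \<Rightarrow> real) \<Rightarrow> real" where
  "X2_norm m w = sqrt (LINT r:{0<..}|lborel.
      (((SOME w'. X2_deriv m w w') r)\<^sup>2 + (real m)\<^sup>2 * (w r)\<^sup>2 / r\<^sup>2) * r)"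

definition L2r_inner :: "(real \<Rightarrow> real) \<Rightarrow> (real \<Rightarrow> real) \<Rightarrow> real" where
  "L2r_inner f g = (LINT r:{0<..}|lborel. f r * g r * r)"

end

theory Submission
  imports Defs "HOL-Probability.Sinc_Integral"
begin

(* Since Q' = -m h / r, the scale derivative of Q(r/s) is m h(r/s) / s > 0. Hence in the
   defect F(s) = (xi + Q^s0 - Q^s, h^s) the profile part G(s) = (Q^s0 - Q^s, h^s) is
   coercive, -(s - s0) G(s) >= c s0 (s - s0)^2, while |(xi, h^s)| <= 6 s^2 ||xi|| by a
   weighted AM-GM; for m >= 4 all the weights h^2 r^3, h r, h^2 / r are dominated by the
   integrable Cauchy weight 1 / (1 + (r/s)^2). So F changes sign between s0 (1 - delta) and
   s0 (1 + delta) with delta = 48 ||xi|| / c, and, F being Lipschitz in s, it vanishes at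
   some s there. The remainder xi + Q^s0 - Q^s then has X^2 norm O(||xi|| + |s/s0 - 1|)
   by the mean value theorem in the scale. *)

section \<open>The harmonic map profile\<close>

lemma DERIV_power_divide_scale:
  assumes "\<sigma> \<noteq> 0"
  shows "((\<lambda>\<sigma>. (r/\<sigma>)^n) has_real_derivative - (real n * (r/\<sigma>)^n / \<sigma>)) (at \<sigma>)"
proof (induction n)
  case (Suc n)
  have "((\<lambda>\<sigma>. r/\<sigma>) has_real_derivative - (r/\<sigma>^2)) (at \<sigma>)"
    using assms by (auto intro!: derivative_eq_intros simp: power2_eq_square)
  from DERIV_mult'[OF this Suc] show ?case
    unfolding power_Suc by (rule DERIV_cong) (use assms in \<open>simp add: field_simps power2_eq_square\<close>)
qed simp

lemma DERIV_power_divide: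
  assumes "r \<noteq> 0" "s \<noteq> 0"
  shows "((\<lambda>r. (r/s)^n) has_real_derivative real n * (r/s)^n / r) (at r)"
proof (induction n)
  case (Suc n)
  have "((\<lambda>r. r/s) has_real_derivative 1/s) (at r)"
    using assms by (auto intro!: derivative_eq_intros)
  from DERIV_mult'[OF this Suc] show ?case
    unfolding power_Suc by (rule DERIV_cong) (use assms in \<open>simp add: field_simps\<close>)
qed simp

lemma hm_eq: "hm m v = 2 * v^m / (1 + (v^m)^2)"
  by (simp add: hm_def power_mult[symmetric] mult.commute)

lemma hm_eq_sin_Qm: "hm m v = sin (Qm m v)"
proof -
  have "sin (Qm m v) = 2 * sin (arctan (v^m)) * cos (arctan (v^m))"
    by (simp add: Qm_def sin_double)
  also have "\<dots> = hm m v"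
    by (simp add: hm_eq sin_arctan cos_arctan add_pos_nonneg)
  finally show ?thesis ..
qed

lemma DERIV_Qm_scale:
  assumes "\<sigma> \<noteq> 0"
  shows "((\<lambda>\<sigma>. Qm m (r/\<sigma>)) has_real_derivative real m * hm m (r/\<sigma>) / \<sigma>) (at \<sigma>)"
proof -
  have "((\<lambda>\<sigma>. pi - 2 * arctan ((r/\<sigma>)^m)) has_real_derivative
       0 - 2 * (inverse (1 + ((r/\<sigma>)^m)^2) * - (real m * (r/\<sigma>)^m / \<sigma>))) (at \<sigma>)"
    by (intro DERIV_diff DERIV_cmult DERIV_const DERIV_chain2[OF DERIV_arctan]
        DERIV_power_divide_scale assms)
  then show ?thesis by (simp add: Qm_def hm_eq field_simps)
qed

lemma DERIV_Qm_radial: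
  assumes "r \<noteq> 0" "s \<noteq> 0"
  shows "((\<lambda>r. Qm m (r/s)) has_real_derivative - (real m * hm m (r/s) / r)) (at r)"
proof -
  have "((\<lambda>r. pi - 2 * arctan ((r/s)^m)) has_real_derivative
       0 - 2 * (inverse (1 + ((r/s)^m)^2) * (real m * (r/s)^m / r))) (at r)"
    by (intro DERIV_diff DERIV_cmult DERIV_const DERIV_chain2[OF DERIV_arctan]
        DERIV_power_divide assms)
  then show ?thesis by (simp add: Qm_def hm_eq field_simps)
qed

lemma DERIV_hm_scale:
  assumes "\<sigma> \<noteq> 0"
  shows "((\<lambda>\<sigma>. hm m (r/\<sigma>)) has_real_derivative
     cos (Qm m (r/\<sigma>)) * (real m * hm m (r/\<sigma>) / \<sigma>)) (at \<sigma>)"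
  using DERIV_chain2[OF DERIV_sin DERIV_Qm_scale[OF assms]] by (simp add: hm_eq_sin_Qm)

lemma continuous_on_hm_scaled: "s \<noteq> 0 \<Longrightarrow> continuous_on S (\<lambda>r. hm m (r/s))"
  unfolding hm_eq by (intro continuous_intros) (auto simp: add_nonneg_eq_0_iff)

lemma continuous_on_Qm_scaled: "s \<noteq> 0 \<Longrightarrow> continuous_on S (\<lambda>r. Qm m (r/s))"
  unfolding Qm_def by (intro continuous_intros) auto

lemma Qm_bounds: "0 \<le> Qm m v" "Qm m v \<le> 2 * pi"
  using arctan_bounded[of "v^m"] by (auto simp: Qm_def)

lemma abs_Qm_diff_le: "\<bar>Qm m u - Qm m v\<bar> \<le> 2 * pi"
  using Qm_bounds[of m u] Qm_bounds[of m v] by linarith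

lemma hm_nonneg: "0 \<le> v \<Longrightarrow> 0 \<le> hm m v"
  by (simp add: hm_eq add_pos_nonneg)

lemma hm_le_1: "hm m v \<le> 1"
proof -
  have "2 * v^m \<le> 1 + (v^m)^2"
    using sum_squares_ge_zero[of "v^m - 1" 0] by (simp add: power2_eq_square algebra_simps)
  then show ?thesis by (simp add: hm_eq add_pos_nonneg)
qed

lemma hm_le_power: "0 \<le> v \<Longrightarrow> hm m v \<le> 2 * v^m"
  unfolding hm_eq by (intro divide_left_mono[of 1, simplified]) (auto simp: add_pos_nonneg)

lemma hm_le_inverse_power:
  assumes "1 \<le> v" "k \<le> m"
  shows "hm m v \<le> 2 / v^k"
proof -
  have "v^k \<le> v^m" using assms by (intro power_increasing) auto
  moreover have "2 * v^m / (1 + (v^m)^2) \<le> 2 / v^m"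
    using assms by (simp add: field_simps add_pos_nonneg power2_eq_square)
  ultimately show ?thesis
    using assms by (simp add: hm_eq) (smt (verit) frac_le zero_less_power)
qed

lemma hm_ge_on_half_unit:
  assumes "1/2 \<le> v" "v \<le> 1"
  shows "(1/2)^m \<le> hm m v"
proof -
  have x: "0 \<le> v^m" "v^m \<le> 1" "(1/2)^m \<le> v^m"
    using assms by (auto intro: power_le_one power_mono)
  then have "v^m * (1 + (v^m)^2) \<le> v^m * 2"
    by (intro mult_left_mono) (auto simp: power_le_one)
  then have "v^m \<le> hm m v"
    by (simp add: hm_eq le_divide_eq add_pos_nonneg mult.commute)
  with x show ?thesis by simp
qed

lemma hm_le_comparable:
  assumes "0 < u" "0 < v" "v \<le> 2 * u" "u \<le> 2 * v"
  shows "hm m v \<le> 8^m * hm m u"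
proof -
  have a: "v^m \<le> 2^m * u^m" and b: "u^m \<le> 2^m * v^m"
    using power_mono[of v "2 * u" m] power_mono[of u "2 * v" m] assms
    by (auto simp: power_mult_distrib)
  have "(u^m)^2 \<le> (2^m * v^m)^2" using b assms by (intro power_mono) auto
  moreover have "(2^m * v^m)^2 = (2^2)^m * (v^m)^2"
    by (simp only: power_mult_distrib power_mult[symmetric] mult.commute)
  ultimately have "(u^m)^2 \<le> 4^m * (v^m)^2" by simp
  then have c: "1 + (u^m)^2 \<le> 4^m * (1 + (v^m)^2)"
    using one_le_power[of "4::real" m] unfolding distrib_left by linarith
  have "hm m v \<le> 2 * (2^m * u^m) / ((1 + (u^m)^2) / 4^m)"
    unfolding hm_eq using a c assms by (intro frac_le) (auto simp: add_pos_nonneg field_simps)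
  also have "\<dots> = (2^m * 4^m) * hm m u" by (simp add: hm_eq field_simps)
  also have "(2::real)^m * 4^m = 8^m" by (simp add: power_mult_distrib[symmetric])
  finally show ?thesis .
qed

definition cauchy_weight :: "real \<Rightarrow> real" where
  "cauchy_weight v = inverse (1 + v^2)"

lemma cauchy_weight_pos: "0 < cauchy_weight v"
  by (simp add: cauchy_weight_def add_pos_nonneg)

lemma cauchy_weight_ge_near: "0 \<le> v \<Longrightarrow> v \<le> 1 \<Longrightarrow> 4 \<le> 8 * cauchy_weight v"
  using power_le_one[of v 2] by (simp add: cauchy_weight_def field_simps add_pos_nonneg)

lemma cauchy_weight_ge_far: "1 \<le> v \<Longrightarrow> 4 / v^2 \<le> 8 * cauchy_weight v"
  using one_le_power[of v 2] by (simp add: cauchy_weight_def field_simps add_pos_nonneg)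

text \<open>These four bounds are where \<open>m \<ge> 4\<close> enters.\<close>

lemma hm_mult_le_weight:
  assumes "m \<ge> 4" "0 < v"
  shows "hm m v * v \<le> 8 * cauchy_weight v"
proof (cases "v \<le> 1")
  case True
  then have "hm m v * v \<le> 1"
    using hm_le_1[of m v] hm_nonneg[of v m] assms by (simp add: mult_le_one)
  then show ?thesis using cauchy_weight_ge_near[of v] True assms by linarith
next
  case False
  then have "hm m v * v \<le> 2 / v^3 * v"
    using hm_le_inverse_power[of v 3 m] assms by (intro mult_right_mono) auto
  also have "\<dots> \<le> 4 / v^2" using False by (simp add: field_simps power2_eq_square power3_eq_cube)
  finally show ?thesis using cauchy_weight_ge_far[of v] False by linarith
qed

lemma hm_sq_mult_le_weight:
  assumes "m \<ge> 4" "0 < v"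
  shows "(hm m v)^2 * v \<le> 8 * cauchy_weight v"
proof -
  have "(hm m v)^2 \<le> hm m v"
    using hm_le_1[of m v] hm_nonneg[of v m] assms by (simp add: power2_eq_square mult_right_le_one_le)
  then have "(hm m v)^2 * v \<le> hm m v * v" using assms by (simp add: mult_right_mono)
  with hm_mult_le_weight[OF assms] show ?thesis by simp
qed

lemma hm_sq_div_le_weight:
  assumes "m \<ge> 4" "0 < v"
  shows "(hm m v)^2 / v \<le> 8 * cauchy_weight v"
proof (cases "v \<le> 1")
  case True
  have "hm m v \<le> 2 * v"
    using hm_le_power[of v m] power_decreasing[of 1 m v] True assms by simp
  then have "(hm m v)^2 / v \<le> (2 * v)^2 / v"
    using hm_nonneg[of v m] assms by (intro divide_right_mono power_mono) auto
  also have "\<dots> \<le> 4" using True assms by (simp add: power2_eq_square)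
  finally show ?thesis using cauchy_weight_ge_near[of v] True assms by linarith
next
  case False
  have "(hm m v)^2 / v \<le> (2 / v)^2 / v"
    using hm_le_inverse_power[of v 1 m] hm_nonneg[of v m] False assms
    by (intro divide_right_mono power_mono) auto
  also have "\<dots> \<le> 4 / v^2" using False by (simp add: field_simps power2_eq_square power3_eq_cube)
  finally show ?thesis using cauchy_weight_ge_far[of v] False by linarith
qed

lemma hm_sq_mult_cube_le_weight:
  assumes "m \<ge> 4" "0 < v"
  shows "(hm m v)^2 * v^3 \<le> 8 * cauchy_weight v"
proof (cases "v \<le> 1")
  case True
  have "(hm m v)^2 * v^3 \<le> 1"
    using hm_le_1[of m v] hm_nonneg[of v m] True assms
    by (intro mult_le_one) (auto simp: power_le_one)
  then show ?thesis using cauchy_weight_ge_near[of v] True assms by linarith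
next
  case False
  have "(hm m v)^2 * v^3 \<le> (2 / v^4)^2 * v^3"
    using hm_le_inverse_power[of v 4 m] hm_nonneg[of v m] False assms
    by (intro mult_right_mono power_mono) auto
  also have "\<dots> = 4 / v^5" using False by (simp add: field_simps power2_eq_square)
  also have "\<dots> \<le> 4 / v^2" using False by (intro divide_left_mono power_increasing) auto
  finally show ?thesis using cauchy_weight_ge_far[of v] False by linarith
qed

lemma MVT_between:
  fixes f f' :: "real \<Rightarrow> real"
  assumes "\<And>z. min a b \<le> z \<Longrightarrow> z \<le> max a b \<Longrightarrow> (f has_real_derivative f' z) (at z)"
  obtains z where "min a b \<le> z" "z \<le> max a b" "f b - f a = (b - a) * f' z"
proof (cases a b rule: linorder_cases)
  case less
  then obtain z where "a < z" "z < b" "f b - f a = (b - a) * f' z"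
    using MVT2[OF less, of f f'] assms by auto
  with less show ?thesis by (intro that[of z]) auto
next
  case equal
  with that show ?thesis by auto
next
  case greater
  then obtain z where "b < z" "z < a" "f a - f b = (a - b) * f' z"
    using MVT2[OF greater, of f f'] assms by auto
  with greater show ?thesis by (intro that[of z]) (auto simp: algebra_simps)
qed

lemma hm_scale_comparable:
  assumes "0 < s0" "0 < r" "s0/2 \<le> z" "z \<le> 2 * s0"
  shows "hm m (r/z) \<le> 8^m * hm m (r/s0)" "hm m (r/s0) \<le> 8^m * hm m (r/z)"
proof -
  have "0 < z" "r/z \<le> 2 * (r/s0)" "r/s0 \<le> 2 * (r/z)"
    using assms by (auto simp: field_simps)
  with assms show "hm m (r/z) \<le> 8^m * hm m (r/s0)" "hm m (r/s0) \<le> 8^m * hm m (r/z)"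
    by (auto intro: hm_le_comparable)
qed

text \<open>\<open>m h(r/z) / z\<close> is the \<open>z\<close>-derivative of \<open>Q(r/z)\<close>.\<close>

lemma scale_derivative_le:
  assumes "0 < s0" "0 < r" "s0/2 \<le> z" "z \<le> 2 * s0"
  shows "real m * hm m (r/z) / z \<le> 2 * real m * 8^m / s0 * hm m (r/s0)"
proof -
  have "real m * hm m (r/z) / z \<le> real m * (8^m * hm m (r/s0)) / (s0/2)"
    using hm_scale_comparable(1)[OF assms, of m] hm_nonneg[of "r/z" m] assms
    by (intro frac_le mult_left_mono) auto
  then show ?thesis by (simp add: field_simps)
qed

lemma scale_derivative_ge:
  assumes "0 < s0" "0 < r" "s0/2 \<le> z" "z \<le> 2 * s0"
  shows "real m / (2 * s0 * 8^m) * hm m (r/s0) \<le> real m * hm m (r/z) / z"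
proof -
  have "real m * (hm m (r/s0) / 8^m) / (2 * s0) \<le> real m * hm m (r/z) / z"
    using hm_scale_comparable(2)[OF assms, of m] hm_nonneg[of "r/z" m] assms
    by (intro frac_le mult_left_mono) (auto simp: field_simps)
  then show ?thesis by (simp add: field_simps)
qed

lemma Qm_scale_lipschitz:
  assumes "0 < s0" "0 < r" "s0/2 \<le> s1" "s1 \<le> 2 * s0" "s0/2 \<le> s2" "s2 \<le> 2 * s0"
  shows "\<bar>Qm m (r/s1) - Qm m (r/s2)\<bar> \<le> \<bar>s1 - s2\<bar> * (2 * real m * 8^m / s0) * hm m (r/s0)"
proof -
  obtain z where z: "min s2 s1 \<le> z" "z \<le> max s2 s1"
    and eq: "Qm m (r/s1) - Qm m (r/s2) = (s1 - s2) * (real m * hm m (r/z) / z)"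
    by (rule MVT_between[where f = "\<lambda>\<sigma>. Qm m (r/\<sigma>)"], rule DERIV_Qm_scale) (use assms in auto)
  have zr: "s0/2 \<le> z" "z \<le> 2 * s0" using z assms by auto
  have "0 \<le> real m * hm m (r/z) / z" using zr assms hm_nonneg[of "r/z" m] by simp
  then show ?thesis
    unfolding eq abs_mult mult.assoc using scale_derivative_le[OF assms(1,2) zr, of m]
    by (intro mult_left_mono) auto
qed

lemma hm_scale_lipschitz:
  assumes "0 < s0" "0 < r" "s0/2 \<le> s1" "s1 \<le> 2 * s0" "s0/2 \<le> s2" "s2 \<le> 2 * s0"
  shows "\<bar>hm m (r/s1) - hm m (r/s2)\<bar> \<le> \<bar>s1 - s2\<bar> * (2 * real m * 8^m / s0) * hm m (r/s0)"
proof -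
  obtain z where z: "min s2 s1 \<le> z" "z \<le> max s2 s1"
    and eq: "hm m (r/s1) - hm m (r/s2) = (s1 - s2) * (cos (Qm m (r/z)) * (real m * hm m (r/z) / z))"
    by (rule MVT_between[where f = "\<lambda>\<sigma>. hm m (r/\<sigma>)"], rule DERIV_hm_scale) (use assms in auto)
  have zr: "s0/2 \<le> z" "z \<le> 2 * s0" using z assms by auto
  have d0: "0 \<le> real m * hm m (r/z) / z" using zr assms hm_nonneg[of "r/z" m] by simp
  have "\<bar>cos (Qm m (r/z)) * (real m * hm m (r/z) / z)\<bar> \<le> real m * hm m (r/z) / z"
    unfolding abs_mult abs_of_nonneg[OF d0] by (rule mult_left_le_one_le[OF d0]) auto
  also have "\<dots> \<le> 2 * real m * 8^m / s0 * hm m (r/s0)"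
    by (rule scale_derivative_le[OF assms(1,2) zr])
  finally show ?thesis
    unfolding eq abs_mult[of "s1 - s2"] mult.assoc by (intro mult_left_mono) auto
qed

text \<open>The scale derivative of \<open>Q\<close> is positive: this coercivity drives the choice of the scale.\<close>

lemma Qm_scale_increment_ge:
  assumes "0 < s0" "0 < r" "s0/2 \<le> s" "s \<le> 2 * s0"
  shows "(s - s0)^2 * (real m / (2 * s0 * 8^m)) * hm m (r/s0) \<le> (s - s0) * (Qm m (r/s) - Qm m (r/s0))"
proof -
  obtain z where z: "min s0 s \<le> z" "z \<le> max s0 s"
    and eq: "Qm m (r/s) - Qm m (r/s0) = (s - s0) * (real m * hm m (r/z) / z)"
    by (rule MVT_between[where f = "\<lambda>\<sigma>. Qm m (r/\<sigma>)"], rule DERIV_Qm_scale) (use assms in auto)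
  have "(s - s0)^2 * (real m / (2 * s0 * 8^m) * hm m (r/s0)) \<le> (s - s0)^2 * (real m * hm m (r/z) / z)"
    using scale_derivative_ge[OF assms(1,2), of z m] z assms by (intro mult_left_mono) auto
  then show ?thesis unfolding eq by (simp add: power2_eq_square mult_ac)
qed

section \<open>Integrals over the half line\<close>

lemma cauchy_weight_scaled_integral:
  assumes "0 < s"
  shows "integrable lborel (\<lambda>r. cauchy_weight (r/s))" "(\<integral>r. cauchy_weight (r/s) \<partial>lborel) = s * pi"
proof -
  have i: "integrable lborel (\<lambda>x::real. inverse (1 + x^2))"
    using integrable_inverse_1_plus_square by (simp add: set_integrable_def)
  have v: "(\<integral>x. inverse (1 + (x::real)^2) \<partial>lborel) = pi"
    using LBINT_inverse_1_plus_square
    by (simp add: interval_lebesgue_integral_def set_lebesgue_integral_def)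
  show "integrable lborel (\<lambda>r. cauchy_weight (r/s))"
    using lborel_integrable_real_affine[OF i, of "1/s" 0] assms by (simp add: cauchy_weight_def)
  show "(\<integral>r. cauchy_weight (r/s) \<partial>lborel) = s * pi"
    using lborel_integral_real_affine[of "1/s" "\<lambda>x. inverse (1 + x^2)" 0] v assms
    by (simp add: cauchy_weight_def field_simps)
qed

lemma continuous_on_imp_set_borel_measurable:
  fixes f :: "real \<Rightarrow> real"
  shows "continuous_on {0<..} f \<Longrightarrow> set_borel_measurable lborel {0<..} f"
  using set_measurable_continuous_on[of "{0<..}" f] by (simp add: set_borel_measurable_def)

lemma set_integrable_cauchy_dominated:
  fixes f :: "real \<Rightarrow> real"
  assumes s: "0 < s" and cont: "continuous_on {0<..} f"
    and bound: "\<And>r. 0 < r \<Longrightarrow> \<bar>f r\<bar> \<le> K * cauchy_weight (r/s)"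
  shows "set_integrable lborel {0<..} f" "\<bar>LINT r:{0<..}|lborel. f r\<bar> \<le> K * s * pi"
proof -
  have "0 \<le> K * cauchy_weight (s/s)" using order_trans[OF abs_ge_zero bound[OF s]] .
  then have K: "0 \<le> K" using cauchy_weight_pos[of "s/s"] by (auto simp: zero_le_mult_iff)
  have bound': "\<bar>indicator {0<..} r * f r\<bar> \<le> K * cauchy_weight (r/s)" for r
    using bound[of r] K cauchy_weight_pos[of "r/s"] by (auto simp: indicator_def)
  have gi: "integrable lborel (\<lambda>r. K * cauchy_weight (r/s))"
    using cauchy_weight_scaled_integral(1)[OF s] by simp
  have "integrable lborel (\<lambda>r. indicator {0<..} r * f r)"
    using continuous_on_imp_set_borel_measurable[OF cont] bound'
    by (intro Bochner_Integration.integrable_bound[OF gi])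
      (auto simp: set_borel_measurable_def intro!: AE_I2 intro: order_trans[OF _ abs_ge_self])
  then show si: "set_integrable lborel {0<..} f" by (simp add: set_integrable_def)
  have "\<bar>\<integral>r. indicator {0<..} r * f r \<partial>lborel\<bar> \<le> (\<integral>r. K * cauchy_weight (r/s) \<partial>lborel)"
    using si bound' by (intro Bochner_Integration.integral_abs_bound_integral[OF _ gi])
      (auto simp: set_integrable_def)
  then show "\<bar>LINT r:{0<..}|lborel. f r\<bar> \<le> K * s * pi"
    using cauchy_weight_scaled_integral(2)[OF s] by (simp add: set_lebesgue_integral_def)
qed

lemma set_integral_nonneg_real:
  fixes f :: "real \<Rightarrow> real"
  assumes "\<And>x. x \<in> A \<Longrightarrow> 0 \<le> f x"
  shows "0 \<le> (LINT x:A|lborel. f x)"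
  unfolding set_lebesgue_integral_def
  by (rule Bochner_Integration.integral_nonneg) (use assms in \<open>auto simp: indicator_def\<close>)

lemma set_integral_abs_le:
  fixes f g :: "real \<Rightarrow> real"
  assumes "set_integrable lborel A f" "set_integrable lborel A g" "\<And>x. x \<in> A \<Longrightarrow> \<bar>f x\<bar> \<le> g x"
  shows "\<bar>LINT x:A|lborel. f x\<bar> \<le> (LINT x:A|lborel. g x)"
  unfolding set_lebesgue_integral_def
  using assms by (intro Bochner_Integration.integral_abs_bound_integral)
    (auto simp: set_integrable_def indicator_def)

lemma set_integral_ge_on_interval:
  fixes f :: "real \<Rightarrow> real"
  assumes "set_integrable lborel {0<..} f" "0 < a" "a \<le> b" "0 \<le> c"
    and "\<And>r. 0 < r \<Longrightarrow> 0 \<le> f r" and "\<And>r. a \<le> r \<Longrightarrow> r \<le> b \<Longrightarrow> c \<le> f r"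
  shows "c * (b - a) \<le> (LINT r:{0<..}|lborel. f r)"
proof -
  have "integrable lborel (\<lambda>r. c * indicator {a..b} r)"
    by (intro integrable_mult_right integrable_real_indicator) (auto simp: emeasure_lborel_Icc_eq)
  then have "(\<integral>r. c * indicator {a..b} r \<partial>lborel) \<le> (\<integral>r. indicator {0<..} r * f r \<partial>lborel)"
    using assms by (intro Bochner_Integration.integral_mono)
      (auto simp: set_integrable_def indicator_def)
  with assms show ?thesis by (simp add: set_lebesgue_integral_def)
qed

text \<open>Optimising the weight in \<open>2xy \<le> \<lambda> x^2 + y^2/\<lambda>\<close>; this replaces Cauchy--Schwarz.\<close>

lemma le_2_sqrt_mult_if_le_weighted_sum:
  fixes x a b :: real
  assumes a: "0 \<le> a" and b: "0 < b" and H: "\<And>l. 0 < l \<Longrightarrow> x \<le> l * a + b / l"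
  shows "x \<le> 2 * sqrt (a * b)"
proof (cases "a = 0")
  case True
  show ?thesis
  proof (rule ccontr)
    assume "\<not> ?thesis"
    then have x: "0 < x" using True by simp
    have "x \<le> 2 * b / x * a + b / (2 * b / x)" using H[of "2 * b / x"] x b by simp
    also have "\<dots> = x / 2" using True x b by simp
    finally show False using x by simp
  qed
next
  case False
  then have ap: "0 < a" using a by simp
  define l where "l = sqrt (b / a)"
  have "l * a = sqrt (b/a) * sqrt (a^2)" using ap by (simp add: l_def)
  also have "\<dots> = sqrt (b/a * a^2)" by (simp only: real_sqrt_mult)
  also have "b/a * a^2 = a * b" using ap by (simp add: power2_eq_square)
  finally have la: "l * a = sqrt (a * b)" .
  have "b / l = sqrt (b^2) / sqrt (b/a)" using b by (simp add: l_def)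
  also have "\<dots> = sqrt (b^2 / (b/a))" by (simp only: real_sqrt_divide)
  also have "b^2 / (b/a) = a * b" using ap b by (simp add: power2_eq_square)
  finally have bl: "b / l = sqrt (a * b)" .
  have "0 < l" using ap b by (simp add: l_def)
  then have "x \<le> l * a + b / l" by (rule H)
  then show ?thesis unfolding la bl by simp
qed

section \<open>The energy space\<close>

definition X2_density :: "nat \<Rightarrow> (real \<Rightarrow> real) \<Rightarrow> (real \<Rightarrow> real) \<Rightarrow> real \<Rightarrow> real" where
  "X2_density m w w' r = ((w' r)^2 + (real m)^2 * (w r)^2 / r^2) * r"

lemma X2_deriv_iff:
  "X2_deriv m w w' \<longleftrightarrow>
     (\<forall>a b. 0 < a \<longrightarrow> a \<le> b \<longrightarrow>
        set_integrable lborel {a..b} w' \<and> w b - w a = (LINT r:{a..b}|lborel. w' r)) \<and>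
     set_integrable lborel {0<..} (X2_density m w w')"
  by (simp add: X2_deriv_def X2_density_def[abs_def])

lemma X2_density_nonneg: "0 < r \<Longrightarrow> 0 \<le> X2_density m w w' r"
  by (simp add: X2_density_def)

lemma exists_nat_bounds:
  fixes x :: real
  assumes "0 < x"
  obtains n :: nat where "1 / real (Suc n) < x" "x < real (Suc n)"
proof -
  obtain n :: nat where n: "max x (1/x) < real n" using reals_Archimedean2 by blast
  then have "x < real (Suc n)" "1 / real (Suc n) < x"
    using assms by (auto simp: field_simps)
  with that show ?thesis by blast
qed

lemma eventually_nat_bounds:
  fixes x :: real
  assumes "0 < x"
  shows "eventually (\<lambda>n. 1 / real (Suc n) < x \<and> x < real (Suc n)) sequentially"
proof -
  obtain N :: nat where N: "1 / real (Suc N) < x" "x < real (Suc N)"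
    using exists_nat_bounds[OF assms] by blast
  have "1 / real (Suc n) < x \<and> x < real (Suc n)" if "N \<le> n" for n
  proof -
    have "1 / real (Suc n) \<le> 1 / real (Suc N)" using that by (intro divide_left_mono) auto
    with N that show ?thesis by simp
  qed
  then show ?thesis unfolding eventually_sequentially by blast
qed

lemma X2_deriv_continuous_on:
  assumes "X2_deriv m w w'"
  shows "continuous_on {0<..} w"
proof (rule continuous_at_imp_continuous_on, intro ballI)
  fix x :: real
  assume "x \<in> {0<..}"
  then have x: "0 < x" by simp
  have ftc: "set_integrable lborel {x/2..y} w' \<and> w y - w (x/2) = (LINT r:{x/2..y}|lborel. w' r)"
    if "x/2 \<le> y" for y
    using assms x that by (simp add: X2_deriv_def)
  have "continuous_on {x/2..2*x} (\<lambda>y. w (x/2) + integral {x/2..y} w')"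
    using ftc[of "2*x"] x
    by (intro continuous_intros indefinite_integral_continuous_1 set_borel_integral_eq_integral(1))
      auto
  then have "continuous_on {x/2..2*x} w"
    by (rule continuous_on_eq) (use ftc set_borel_integral_eq_integral(2) in force)
  moreover have "x \<in> interior {x/2..2*x}" using x by simp
  ultimately show "isCont w x" using continuous_on_interior by blast
qed

lemma X2_deriv_set_borel_measurable:
  assumes "X2_deriv m w w'"
  shows "set_borel_measurable lborel {0<..} w'"
proof -
  define u where "u n r = indicator {1 / real (Suc n) .. real (Suc n)} r * w' r" for n r
  have "integrable lborel (u n)" for n
    using assms unfolding u_def[abs_def] X2_deriv_def set_integrable_def
    by (simp add: field_simps)
  then have um: "u n \<in> borel_measurable borel" for n
    using borel_measurable_integrable by simp
  have "(\<lambda>n. u n x) \<longlonglongrightarrow> indicator {0<..} x * w' x" for x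
  proof (cases "0 < x")
    case True
    have "eventually (\<lambda>n. u n x = indicator {0<..} x * w' x) sequentially"
      using eventually_nat_bounds[OF True] by eventually_elim (use True in \<open>auto simp: u_def\<close>)
    then show ?thesis by (rule tendsto_eventually)
  next
    case False
    have "\<not> 1 / real (Suc n) \<le> x" for n
      using False le_less_trans[of x 0 "1 / real (Suc n)"] by (simp add: not_le)
    then have "u n x = 0" for n by (simp add: u_def)
    with False show ?thesis by (simp add: indicator_def)
  qed
  then have "(\<lambda>r. indicator {0<..} r * w' r) \<in> borel_measurable borel"
    by (rule borel_measurable_LIMSEQ_real[OF _ um])
  then show ?thesis by (simp add: set_borel_measurable_def)
qed

lemma zero_on_interval_if_integrals_vanish:
  fixes f :: "real \<Rightarrow> real"
  assumes f: "f integrable_on {a..b}"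
    and zero: "\<And>y z. a \<le> y \<Longrightarrow> y \<le> z \<Longrightarrow> z \<le> b \<Longrightarrow> integral {y..z} f = 0"
  shows "\<exists>N. negligible N \<and> (\<forall>x. x \<notin> N \<longrightarrow> a < x \<longrightarrow> x < b \<longrightarrow> f x = 0)"
proof -
  define g where "g x = (if x \<in> {a..b} then f x else 0)" for x
  have "g integrable_on UNIV"
    using f integrable_restrict_UNIV[of "{a..b}" f] by (simp add: g_def[abs_def])
  then have "g integrable_on cbox c e" for c e by (rule integrable_on_subcbox) auto
  then obtain N where N: "negligible N" and NP: "\<And>x e. \<lbrakk>x \<notin> N; 0 < e\<rbrakk> \<Longrightarrow>
      \<exists>d>0. \<forall>h. 0 < h \<and> h < d \<longrightarrow>
        norm (integral (cbox x (x + h *\<^sub>R One)) g /\<^sub>R h ^ DIM(real) - g x) < e"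
    by (rule integrable_ccontinuous_explicit) blast
  have "f x = 0" if x: "x \<notin> N" "a < x" "x < b" for x
  proof (rule ccontr)
    assume "f x \<noteq> 0"
    then obtain d where d: "0 < d" and dP: "\<forall>h. 0 < h \<and> h < d \<longrightarrow>
        norm (integral (cbox x (x + h *\<^sub>R One)) g /\<^sub>R h ^ DIM(real) - g x) < \<bar>f x\<bar>"
      using NP[OF x(1), of "\<bar>f x\<bar>"] by auto
    define h where "h = min (d/2) ((b - x)/2)"
    have h: "0 < h" "h < d" "x + h < b" using d x unfolding h_def by (auto simp: min_def field_simps)
    have "integral {x..x+h} g = integral {x..x+h} f"
      using x h by (intro integral_cong) (auto simp: g_def)
    also have "\<dots> = 0" using x h by (intro zero) auto
    finally have "integral (cbox x (x + h *\<^sub>R One)) g = 0" by simp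
    moreover have "g x = f x" using x by (simp add: g_def)
    ultimately show False using dP h by auto
  qed
  with N show ?thesis by blast
qed

lemma X2_deriv_unique_AE:
  assumes d1: "X2_deriv m w d1" and d2: "X2_deriv m w d2"
  shows "AE x in lborel. 0 < x \<longrightarrow> d1 x = d2 x"
proof -
  have interval: "set_integrable lborel {y..z} (\<lambda>x. d1 x - d2 x)
      \<and> integral {y..z} (\<lambda>x. d1 x - d2 x) = 0" if "0 < y" "y \<le> z" for y z
  proof -
    have s1: "set_integrable lborel {y..z} d1" and e1: "w z - w y = (LINT r:{y..z}|lborel. d1 r)"
      and s2: "set_integrable lborel {y..z} d2" and e2: "w z - w y = (LINT r:{y..z}|lborel. d2 r)"
      using d1 d2 that by (auto simp: X2_deriv_def)
    have sd: "set_integrable lborel {y..z} (\<lambda>x. d1 x - d2 x)" by (rule set_integral_diff(1)[OF s1 s2])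
    then show ?thesis
      using set_borel_integral_eq_integral(2)[OF sd] set_integral_diff(2)[OF s1 s2] e1 e2 by simp
  qed
  have "\<exists>N. negligible N \<and> (\<forall>x. x \<notin> N \<longrightarrow> 1 / real (Suc n) < x \<longrightarrow> x < real (Suc n) \<longrightarrow> d1 x = d2 x)"
    for n
  proof -
    have pos: "0 < 1 / real (Suc n)" "1 / real (Suc n) \<le> real (Suc n)" by (auto simp: field_simps)
    have "(\<lambda>x. d1 x - d2 x) integrable_on {1 / real (Suc n) .. real (Suc n)}"
      using interval[OF pos] set_borel_integral_eq_integral(1) by blast
    moreover have "integral {y..z} (\<lambda>x. d1 x - d2 x) = 0"
      if "1 / real (Suc n) \<le> y" "y \<le> z" for y z
      using interval[of y z] pos(1) that by linarith
    ultimately show ?thesis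
      using zero_on_interval_if_integrals_vanish[of "\<lambda>x. d1 x - d2 x"] by auto
  qed
  then obtain N where N: "\<And>n. negligible (N n)"
    and NP: "\<And>n x. x \<notin> N n \<Longrightarrow> 1 / real (Suc n) < x \<Longrightarrow> x < real (Suc n) \<Longrightarrow> d1 x = d2 x"
    by metis
  have "AE x in lebesgue. \<forall>n. x \<notin> N n"
    unfolding AE_all_countable using N by (auto intro: AE_not_in simp: negligible_iff_null_sets)
  then have "AE x in lebesgue. 0 < x \<longrightarrow> d1 x = d2 x"
    by eventually_elim (metis NP exists_nat_bounds)
  then show ?thesis by (simp add: AE_completion_iff)
qed

lemma X2_norm_eq:
  assumes d: "X2_deriv m w w'"
  shows "X2_norm m w = sqrt (LINT r:{0<..}|lborel. X2_density m w w' r)"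
proof -
  define d where "d = (SOME w'. X2_deriv m w w')"
  have dd: "X2_deriv m w d" unfolding d_def by (rule someI[of "X2_deriv m w" w', OF d])
  have ae: "AE x in lborel. 0 < x \<longrightarrow> d x = w' x" by (rule X2_deriv_unique_AE[OF dd d])
  have "(LINT r:{0<..}|lborel. X2_density m w d r) = (LINT r:{0<..}|lborel. X2_density m w w' r)"
    unfolding set_lebesgue_integral_def
    using dd d ae by (intro integral_cong_AE)
      (auto simp: X2_deriv_iff set_integrable_def X2_density_def indicator_def
        elim!: eventually_mono)
  then show ?thesis by (simp add: X2_norm_def X2_density_def d_def)
qed

lemma set_borel_measurable_X2_density:
  assumes "set_borel_measurable lborel {0<..} w" "set_borel_measurable lborel {0<..} w'"
  shows "set_borel_measurable lborel {0<..} (X2_density m w w')"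
proof -
  have "(\<lambda>r. indicator {0<..} r * X2_density m w w' r) =
      (\<lambda>r. indicator {0<..} r * (((indicator {0<..} r * w' r)^2
          + (real m)^2 * (indicator {0<..} r * w r)^2 / r^2) * r))"
    by (auto simp: X2_density_def indicator_def)
  moreover have "\<dots> \<in> borel_measurable lborel"
  proof -
    have "(\<lambda>r. indicator {0<..} r * w r) \<in> borel_measurable lborel"
      "(\<lambda>r. indicator {0<..} r * w' r) \<in> borel_measurable lborel"
      using assms by (simp_all add: set_borel_measurable_def)
    then show ?thesis by measurable
  qed
  ultimately show ?thesis by (simp add: set_borel_measurable_def)
qed

lemma X2_density_add_le:
  assumes "0 < r"
  shows "X2_density m (\<lambda>r. w r + v r) (\<lambda>r. w' r + v' r) r \<le> 2 * X2_density m w w' r + 2 * X2_density m v v' r"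
proof -
  have sq: "(a + b)^2 \<le> 2 * a^2 + 2 * b^2" for a b :: real
    using sum_squares_ge_zero[of "a - b" 0] by (simp add: power2_eq_square algebra_simps)
  have "X2_density m (\<lambda>r. w r + v r) (\<lambda>r. w' r + v' r) r
      \<le> ((2 * (w' r)^2 + 2 * (v' r)^2) + (real m)^2 * (2 * (w r)^2 + 2 * (v r)^2) / r^2) * r"
    unfolding X2_density_def using sq assms
    by (intro mult_right_mono add_mono mult_left_mono divide_right_mono) auto
  also have "\<dots> = 2 * X2_density m w w' r + 2 * X2_density m v v' r"
    using assms by (simp add: X2_density_def field_simps)
  finally show ?thesis .
qed

lemma X2_deriv_add:
  assumes w: "X2_deriv m w w'" and v: "X2_deriv m v v'"
  shows "X2_deriv m (\<lambda>r. w r + v r) (\<lambda>r. w' r + v' r)"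
    and "(LINT r:{0<..}|lborel. X2_density m (\<lambda>r. w r + v r) (\<lambda>r. w' r + v' r) r)
      \<le> 2 * (LINT r:{0<..}|lborel. X2_density m w w' r) + 2 * (LINT r:{0<..}|lborel. X2_density m v v' r)"
proof -
  have iw: "set_integrable lborel {0<..} (X2_density m w w')"
    and iv: "set_integrable lborel {0<..} (X2_density m v v')"
    using w v by (simp_all add: X2_deriv_iff)
  have bound: "set_integrable lborel {0<..} (\<lambda>r. 2 * X2_density m w w' r + 2 * X2_density m v v' r)"
    using iw iv by (intro set_integral_add(1) set_integrable_mult_right)
  have measurable: "set_borel_measurable lborel {0<..} (\<lambda>r. w r + v r)"
      "set_borel_measurable lborel {0<..} (\<lambda>r. w' r + v' r)"
    using continuous_on_imp_set_borel_measurable[OF X2_deriv_continuous_on[OF w]]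
      continuous_on_imp_set_borel_measurable[OF X2_deriv_continuous_on[OF v]]
      X2_deriv_set_borel_measurable[OF w] X2_deriv_set_borel_measurable[OF v]
    by (simp_all add: set_borel_measurable_def distrib_left borel_measurable_add)
  have integrable: "set_integrable lborel {0<..} (X2_density m (\<lambda>r. w r + v r) (\<lambda>r. w' r + v' r))"
    using X2_density_add_le X2_density_nonneg
    by (intro set_integrable_bound[OF bound set_borel_measurable_X2_density[OF measurable]] AE_I2)
      fastforce
  have "set_integrable lborel {a..b} (\<lambda>r. w' r + v' r)
      \<and> (w b + v b) - (w a + v a) = (LINT r:{a..b}|lborel. w' r + v' r)" if "0 < a" "a \<le> b" for a b
  proof -
    have "set_integrable lborel {a..b} w'" "set_integrable lborel {a..b} v'"
      "w b - w a = (LINT r:{a..b}|lborel. w' r)" "v b - v a = (LINT r:{a..b}|lborel. v' r)"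
      using w v that by (auto simp: X2_deriv_def)
    then show ?thesis by (simp add: set_integral_add)
  qed
  with integrable show "X2_deriv m (\<lambda>r. w r + v r) (\<lambda>r. w' r + v' r)"
    by (simp add: X2_deriv_iff)
  have "(LINT r:{0<..}|lborel. X2_density m (\<lambda>r. w r + v r) (\<lambda>r. w' r + v' r) r)
      \<le> (LINT r:{0<..}|lborel. 2 * X2_density m w w' r + 2 * X2_density m v v' r)"
    using X2_density_add_le by (intro set_integral_mono[OF integrable bound]) auto
  also have "\<dots> = 2 * (LINT r:{0<..}|lborel. X2_density m w w' r) + 2 * (LINT r:{0<..}|lborel. X2_density m v v' r)"
    using iw iv by (simp add: set_integral_add(2))
  finally show "(LINT r:{0<..}|lborel. X2_density m (\<lambda>r. w r + v r) (\<lambda>r. w' r + v' r) r)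
      \<le> 2 * (LINT r:{0<..}|lborel. X2_density m w w' r) + 2 * (LINT r:{0<..}|lborel. X2_density m v v' r)" .
qed

section \<open>Choosing the scale\<close>

lemma hm_scaled_mult_le_weight:
  assumes "4 \<le> m" "0 < s" "0 < r"
  shows "hm m (r/s) * r \<le> 8 * s * cauchy_weight (r/s)"
proof -
  have "hm m (r/s) * r = s * (hm m (r/s) * (r/s))" using assms by simp
  also have "\<dots> \<le> s * (8 * cauchy_weight (r/s))"
    using hm_mult_le_weight[OF assms(1), of "r/s"] assms by (intro mult_left_mono) auto
  finally show ?thesis by simp
qed

lemma hm_scaled_mult_integrable:
  assumes "4 \<le> m" "0 < s"
  shows "set_integrable lborel {0<..} (\<lambda>r. hm m (r/s) * r)"
proof (rule set_integrable_cauchy_dominated(1)[OF assms(2)])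
  show "continuous_on {0<..} (\<lambda>r. hm m (r/s) * r)"
    using assms by (intro continuous_intros continuous_on_hm_scaled) auto
  show "\<bar>hm m (r/s) * r\<bar> \<le> 8 * s * cauchy_weight (r/s)" if "0 < r" for r
    using hm_scaled_mult_le_weight[OF assms that] hm_nonneg[of "r/s" m] assms that by simp
qed

lemma hm_scaled_sq_mult_integrable:
  assumes "4 \<le> m" "0 < s"
  shows "set_integrable lborel {0<..} (\<lambda>r. (hm m (r/s))^2 * r)"
proof (rule set_integrable_cauchy_dominated(1)[OF assms(2)])
  show "continuous_on {0<..} (\<lambda>r. (hm m (r/s))^2 * r)"
    using assms by (intro continuous_intros continuous_on_hm_scaled) auto
  fix r :: real
  assume r: "0 < r"
  have "(hm m (r/s))^2 * r = s * ((hm m (r/s))^2 * (r/s))" using assms by simp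
  also have "\<dots> \<le> s * (8 * cauchy_weight (r/s))"
    using hm_sq_mult_le_weight[OF assms(1), of "r/s"] assms r by (intro mult_left_mono) auto
  finally show "\<bar>(hm m (r/s))^2 * r\<bar> \<le> 8 * s * cauchy_weight (r/s)" using r by (simp add: mult_ac)
qed

lemma hm_scaled_sq_mult_cube_integral:
  assumes "4 \<le> m" "0 < s"
  shows "set_integrable lborel {0<..} (\<lambda>r. (hm m (r/s))^2 * r^3)"
    "(LINT r:{0<..}|lborel. (hm m (r/s))^2 * r^3) \<le> 8 * s^4 * pi"
proof -
  have cont: "continuous_on {0<..} (\<lambda>r. (hm m (r/s))^2 * r^3)"
    using assms by (intro continuous_intros continuous_on_hm_scaled) auto
  have bound: "\<bar>(hm m (r/s))^2 * r^3\<bar> \<le> 8 * s^3 * cauchy_weight (r/s)" if "0 < r" for r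
  proof -
    have "(hm m (r/s))^2 * r^3 = s^3 * ((hm m (r/s))^2 * (r/s)^3)" using assms by (simp add: power_divide)
    also have "\<dots> \<le> s^3 * (8 * cauchy_weight (r/s))"
      using hm_sq_mult_cube_le_weight[OF assms(1), of "r/s"] assms that by (intro mult_left_mono) auto
    finally show ?thesis using that by simp
  qed
  show "set_integrable lborel {0<..} (\<lambda>r. (hm m (r/s))^2 * r^3)"
    by (rule set_integrable_cauchy_dominated(1)[OF assms(2) cont bound])
  have "\<bar>LINT r:{0<..}|lborel. (hm m (r/s))^2 * r^3\<bar> \<le> 8 * s^3 * s * pi"
    by (rule set_integrable_cauchy_dominated(2)[OF assms(2) cont bound])
  then show "(LINT r:{0<..}|lborel. (hm m (r/s))^2 * r^3) \<le> 8 * s^4 * pi"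
    by (simp add: power_Suc power3_eq_cube power4_eq_xxxx mult_ac)
qed

lemma hm_scaled_sq_mult_integral_ge:
  assumes "4 \<le> m" "0 < s"
  shows "(1/4)^m * s^2 / 4 \<le> (LINT r:{0<..}|lborel. (hm m (r/s))^2 * r)"
proof -
  have "(1/4)^m * (s/2) \<le> (hm m (r/s))^2 * r" if "s/2 \<le> r" "r \<le> s" for r
  proof -
    have "1/2 \<le> r/s" "r/s \<le> 1" using that assms by (auto simp: field_simps)
    then have "((1/2)^m)^2 \<le> (hm m (r/s))^2" by (intro power_mono hm_ge_on_half_unit) auto
    then have "(1/4)^m \<le> (hm m (r/s))^2" by (simp add: power2_eq_square power_mult_distrib[symmetric])
    then show ?thesis using that assms by (intro mult_mono) auto
  qed
  then have "(1/4)^m * (s/2) * (s - s/2) \<le> (LINT r:{0<..}|lborel. (hm m (r/s))^2 * r)"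
    using assms by (intro set_integral_ge_on_interval hm_scaled_sq_mult_integrable) auto
  then show ?thesis by (simp add: power2_eq_square)
qed

lemma abs_mult_le_weighted_squares:
  fixes r l h x :: real
  assumes "0 < r" "0 < l" "0 \<le> h"
  shows "\<bar>x * h * r\<bar> \<le> l / 2 * (x^2 / r) + 1 / (2 * l) * (h^2 * r^3)"
proof -
  have "0 \<le> (l * \<bar>x\<bar> - h * r^2)^2" by simp
  then have "2 * l * \<bar>x\<bar> * h * r^2 \<le> l^2 * x^2 + h^2 * r^4"
    by (simp add: power2_eq_square algebra_simps power4_eq_xxxx)
  then have "(2 * l * \<bar>x\<bar> * h * r^2) / (2 * l * r) \<le> (l^2 * x^2 + h^2 * r^4) / (2 * l * r)"
    using assms by (intro divide_right_mono) auto
  then show ?thesis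
    using assms by (simp add: abs_mult field_simps power2_eq_square power3_eq_cube power4_eq_xxxx)
qed

lemma abs_product_difference_le:
  fixes a dh dq h x e r :: real
  assumes "\<bar>a\<bar> \<le> x" "\<bar>dh\<bar> \<le> e" "\<bar>dq\<bar> \<le> e" "0 \<le> h" "h \<le> 1" "0 < r"
  shows "\<bar>(a * dh - dq * h) * r\<bar> \<le> (x + 1) * e * r"
proof -
  have "\<bar>a * dh\<bar> \<le> x * e" "\<bar>dq * h\<bar> \<le> e * 1"
    unfolding abs_mult using assms by (intro mult_mono; force)+
  then have "\<bar>a * dh - dq * h\<bar> \<le> (x + 1) * e" by (simp add: abs_le_iff algebra_simps)
  with assms show ?thesis by (simp add: abs_mult mult_right_mono)
qed

definition coercivity_const :: "nat \<Rightarrow> real" where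
  "coercivity_const m = real m / (8 * 256^m)"

definition scale_energy_const :: "nat \<Rightarrow> real" where
  "scale_energy_const m = 64 * pi * (real m)^4 * 64^m"

definition modulation_const :: "nat \<Rightarrow> real" where
  "modulation_const m = 48 / coercivity_const m
     + sqrt (2 + 2 * scale_energy_const m * (48 / coercivity_const m)^2)"

locale modulation =
  fixes m :: nat and s0 :: real and \<xi> \<xi>' :: "real \<Rightarrow> real"
  assumes m_ge_4: "4 \<le> m" and s0_pos: "0 < s0" and \<xi>_deriv: "X2_deriv m \<xi> \<xi>'"
begin

definition energy :: real where
  "energy = (LINT r:{0<..}|lborel. X2_density m \<xi> \<xi>' r)"

definition remainder :: "real \<Rightarrow> real \<Rightarrow> real" where
  "remainder s r = \<xi> r + Qs m s0 r - Qs m s r"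

definition defect :: "real \<Rightarrow> real" where
  "defect s = L2r_inner (remainder s) (hs m s)"

definition profile_gap :: "real \<Rightarrow> real \<Rightarrow> real" where
  "profile_gap s r = Qm m (r/s0) - Qm m (r/s)"

definition profile_gap_deriv :: "real \<Rightarrow> real \<Rightarrow> real" where
  "profile_gap_deriv s r = real m * (hm m (r/s) - hm m (r/s0)) / r"

definition \<xi>_pairing :: "real \<Rightarrow> real" where
  "\<xi>_pairing s = (LINT r:{0<..}|lborel. \<xi> r * hm m (r/s) * r)"

definition profile_pairing :: "real \<Rightarrow> real" where
  "profile_pairing s = (LINT r:{0<..}|lborel. profile_gap s r * hm m (r/s) * r)"

lemma energy_nonneg: "0 \<le> energy"
  unfolding energy_def by (rule set_integral_nonneg_real) (simp add: X2_density_nonneg)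

lemma X2_norm_\<xi>: "X2_norm m \<xi> = sqrt energy"
  unfolding energy_def by (rule X2_norm_eq[OF \<xi>_deriv])

lemma remainder_eq: "remainder s r = \<xi> r + profile_gap s r"
  by (simp add: remainder_def profile_gap_def Qs_def)

lemma \<xi>_pairing_integrable_and_bound:
  assumes s: "0 < s"
  shows "set_integrable lborel {0<..} (\<lambda>r. \<xi> r * hm m (r/s) * r)"
    "\<bar>\<xi>_pairing s\<bar> \<le> 6 * s^2 * sqrt energy"
proof -
  let ?X = "X2_density m \<xi> \<xi>'" and ?H = "\<lambda>r. (hm m (r/s))^2 * r^3"
  have iX: "set_integrable lborel {0<..} ?X" using \<xi>_deriv by (simp add: X2_deriv_iff)
  note iH = hm_scaled_sq_mult_cube_integral[OF m_ge_4 s]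
  have pointwise: "\<bar>\<xi> r * hm m (r/s) * r\<bar> \<le> l / 2 * ?X r + 1 / (2 * l) * ?H r"
    if r: "0 < r" and l: "0 < l" for r l
  proof -
    have "(\<xi> r)^2 \<le> (real m)^2 * (\<xi> r)^2"
      using m_ge_4 mult_right_mono[of 1 "(real m)^2" "(\<xi> r)^2"] by simp
    then have "(\<xi> r)^2 / r \<le> (real m)^2 * (\<xi> r)^2 / r" using r by (simp add: divide_right_mono)
    also have "\<dots> = (real m)^2 * (\<xi> r)^2 / r^2 * r" using r by (simp add: power2_eq_square)
    also have "\<dots> \<le> ?X r" using r by (simp add: X2_density_def distrib_right)
    finally have "l / 2 * ((\<xi> r)^2 / r) \<le> l / 2 * ?X r" using l by (intro mult_left_mono) auto
    moreover have "0 \<le> hm m (r/s)" using r s by (simp add: hm_nonneg)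
    ultimately show ?thesis
      using abs_mult_le_weighted_squares[OF r l, of "hm m (r/s)" "\<xi> r"] by linarith
  qed
  have bound: "set_integrable lborel {0<..} (\<lambda>r. l / 2 * ?X r + 1 / (2 * l) * ?H r)" for l
    using iX iH(1) by (intro set_integral_add(1) set_integrable_mult_right)
  show integrable: "set_integrable lborel {0<..} (\<lambda>r. \<xi> r * hm m (r/s) * r)"
  proof (rule set_integrable_bound[OF bound[of 1]])
    show "set_borel_measurable lborel {0<..} (\<lambda>r. \<xi> r * hm m (r/s) * r)"
      using s by (intro continuous_on_imp_set_borel_measurable continuous_intros
          continuous_on_hm_scaled X2_deriv_continuous_on[OF \<xi>_deriv]) auto
    have "\<bar>\<xi> r * hm m (r/s) * r\<bar> \<le> \<bar>1 / 2 * ?X r + 1 / (2 * 1) * ?H r\<bar>" if "0 < r" for r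
      using order_trans[OF pointwise[OF that, of 1] abs_ge_self] by simp
    then show "AE r in lborel. r \<in> {0<..} \<longrightarrow>
        norm (\<xi> r * hm m (r/s) * r) \<le> norm (1 / 2 * ?X r + 1 / (2 * 1) * ?H r)"
      by (intro AE_I2) simp
  qed
  have "\<bar>\<xi>_pairing s\<bar> \<le> l * (energy / 2) + 4 * pi * s^4 / l" if l: "0 < l" for l
  proof -
    have "\<bar>\<xi>_pairing s\<bar> \<le> (LINT r:{0<..}|lborel. l / 2 * ?X r + 1 / (2 * l) * ?H r)"
      unfolding \<xi>_pairing_def using pointwise l by (intro set_integral_abs_le[OF integrable bound]) auto
    also have "\<dots> = l / 2 * energy + 1 / (2 * l) * (LINT r:{0<..}|lborel. ?H r)"
      using iX iH(1) by (simp add: set_integral_add(2) energy_def)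
    also have "\<dots> \<le> l / 2 * energy + 1 / (2 * l) * (8 * s^4 * pi)"
      using iH(2) l by (intro add_left_mono mult_left_mono) auto
    finally show ?thesis using l by (simp add: field_simps)
  qed
  then have "\<bar>\<xi>_pairing s\<bar> \<le> 2 * sqrt (energy / 2 * (4 * pi * s^4))"
    using energy_nonneg s by (intro le_2_sqrt_mult_if_le_weighted_sum) auto
  also have "energy / 2 * (4 * pi * s^4) = (2 * pi) * energy * (s^2)^2"
    by (simp add: power_mult[symmetric])
  also have "sqrt \<dots> = sqrt (2 * pi) * sqrt energy * s^2"
    by (simp only: real_sqrt_mult real_sqrt_abs[of "s^2", unfolded power2_abs] abs_power2)
  also have "2 * (sqrt (2 * pi) * sqrt energy * s^2) \<le> 2 * (3 * sqrt energy * s^2)"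
  proof -
    have "sqrt (2 * pi) \<le> sqrt (3^2)" using pi_less_4 by (intro real_sqrt_le_mono) simp
    then show ?thesis using energy_nonneg by (intro mult_right_mono mult_left_mono) auto
  qed
  finally show "\<bar>\<xi>_pairing s\<bar> \<le> 6 * s^2 * sqrt energy" by (simp add: mult_ac)
qed


lemma profile_gap_self [simp]: "profile_gap s0 r = 0"
  by (simp add: profile_gap_def)

lemma profile_gap_integrand_integrable:
  assumes s: "0 < s"
  shows "set_integrable lborel {0<..} (\<lambda>r. profile_gap s r * hm m (r/s) * r)"
proof (rule set_integrable_cauchy_dominated(1)[OF s])
  show "continuous_on {0<..} (\<lambda>r. profile_gap s r * hm m (r/s) * r)"
    unfolding profile_gap_def using s s0_pos
    by (intro continuous_intros continuous_on_hm_scaled continuous_on_Qm_scaled) auto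
  fix r :: real
  assume r: "0 < r"
  have "\<bar>profile_gap s r * hm m (r/s) * r\<bar> = \<bar>profile_gap s r\<bar> * (hm m (r/s) * r)"
    using hm_nonneg[of "r/s" m] r s by (simp add: abs_mult)
  also have "\<dots> \<le> (2 * pi) * (8 * s * cauchy_weight (r/s))"
    unfolding profile_gap_def
    by (rule mult_mono[OF abs_Qm_diff_le hm_scaled_mult_le_weight[OF m_ge_4 s r]])
      (use hm_nonneg[of "r/s" m] r s in auto)
  finally show "\<bar>profile_gap s r * hm m (r/s) * r\<bar> \<le> 16 * pi * s * cauchy_weight (r/s)" by simp
qed

lemma defect_split:
  assumes "0 < s"
  shows "set_integrable lborel {0<..} (\<lambda>r. remainder s r * hs m s r * r)"
    "defect s = \<xi>_pairing s + profile_pairing s"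
proof -
  have eq: "remainder s r * hs m s r * r = \<xi> r * hm m (r/s) * r + profile_gap s r * hm m (r/s) * r"
    for r by (simp add: remainder_eq hs_def algebra_simps)
  note integrable = \<xi>_pairing_integrable_and_bound(1)[OF assms] profile_gap_integrand_integrable[OF assms]
  show "set_integrable lborel {0<..} (\<lambda>r. remainder s r * hs m s r * r)"
    unfolding eq using integrable by (rule set_integral_add(1))
  show "defect s = \<xi>_pairing s + profile_pairing s"
    unfolding defect_def L2r_inner_def eq \<xi>_pairing_def profile_pairing_def
    using integrable by (rule set_integral_add(2))
qed

lemma profile_pairing_coercive:
  assumes s: "s0/2 \<le> s" "s \<le> 2 * s0"
  shows "coercivity_const m * s0 * (s - s0)^2 \<le> - (s - s0) * profile_pairing s"
proof -
  have sp: "0 < s" using s s0_pos by simp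
  define c1 where "c1 = (s - s0)^2 * (real m / (2 * s0 * 64^m))"
  have pointwise: "c1 * ((hm m (r/s0))^2 * r) \<le> - (s - s0) * (profile_gap s r * hm m (r/s) * r)"
    if "r \<in> {0<..}" for r
  proof -
    have r: "0 < r" using that by simp
    have h0: "0 \<le> hm m (r/s0)" using hm_nonneg[of "r/s0" m] r s0_pos by simp
    note increment = Qm_scale_increment_ge[OF s0_pos r s, of m]
    have compare: "hm m (r/s0) / 8^m \<le> hm m (r/s)"
      using hm_scale_comparable(2)[OF s0_pos r s, of m] by (simp add: field_simps)
    have "0 \<le> (s - s0)^2 * (real m / (2 * s0 * 8^m)) * hm m (r/s0)" using h0 s0_pos by simp
    then have increment_nonneg: "0 \<le> (s - s0) * (Qm m (r/s) - Qm m (r/s0))"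
      using increment by linarith
    have "c1 * ((hm m (r/s0))^2 * r)
        = ((s - s0)^2 * (real m / (2 * s0 * 8^m)) * hm m (r/s0)) * (hm m (r/s0) / 8^m) * r"
      using s0_pos by (simp add: c1_def field_simps power2_eq_square power_mult_distrib[symmetric])
    also have "\<dots> \<le> ((s - s0) * (Qm m (r/s) - Qm m (r/s0))) * hm m (r/s) * r"
      using h0 r by (intro mult_right_mono mult_mono[OF increment compare increment_nonneg]) auto
    also have "\<dots> = - (s - s0) * (profile_gap s r * hm m (r/s) * r)"
      by (simp add: profile_gap_def algebra_simps)
    finally show ?thesis .
  qed
  have "c1 * ((1/4)^m * s0^2 / 4) \<le> c1 * (LINT r:{0<..}|lborel. (hm m (r/s0))^2 * r)"
    using hm_scaled_sq_mult_integral_ge[OF m_ge_4 s0_pos] s0_pos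
    by (intro mult_left_mono) (auto simp: c1_def)
  also have "\<dots> \<le> (LINT r:{0<..}|lborel. - (s - s0) * (profile_gap s r * hm m (r/s) * r))"
    using pointwise hm_scaled_sq_mult_integrable[OF m_ge_4 s0_pos]
      profile_gap_integrand_integrable[OF sp]
    by (simp only: set_integral_mult_right[symmetric])
      (intro set_integral_mono set_integrable_mult_right)
  also have "\<dots> = - (s - s0) * profile_pairing s" by (simp add: profile_pairing_def)
  also have "c1 * ((1/4)^m * s0^2 / 4) = coercivity_const m * s0 * (s - s0)^2"
    using s0_pos by (simp add: c1_def coercivity_const_def field_simps power2_eq_square
        power_one_over power_mult_distrib[symmetric])
  finally show ?thesis .
qed

lemma profile_pairing_sign:
  assumes "s0/2 \<le> s" "s \<le> 2 * s0"
  shows "s0 < s \<Longrightarrow> profile_pairing s \<le> - (coercivity_const m * s0 * (s - s0))"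
    and "s < s0 \<Longrightarrow> coercivity_const m * s0 * (s0 - s) \<le> profile_pairing s"
proof -
  note coercive = profile_pairing_coercive[OF assms]
  show "profile_pairing s \<le> - (coercivity_const m * s0 * (s - s0))" if "s0 < s"
  proof -
    have "(s - s0) * (coercivity_const m * s0 * (s - s0)) \<le> (s - s0) * - profile_pairing s"
      using coercive by (simp add: power2_eq_square algebra_simps)
    then have "coercivity_const m * s0 * (s - s0) \<le> - profile_pairing s"
      by (rule mult_left_le_imp_le) (use that in simp)
    then show ?thesis by linarith
  qed
  show "coercivity_const m * s0 * (s0 - s) \<le> profile_pairing s" if "s < s0"
  proof -
    have "(s0 - s) * (coercivity_const m * s0 * (s0 - s)) \<le> (s0 - s) * profile_pairing s"
      using coercive by (simp add: power2_eq_square algebra_simps)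
    then show ?thesis by (rule mult_left_le_imp_le) (use that in simp)
  qed
qed


definition lipschitz_weight :: "real \<Rightarrow> real" where
  "lipschitz_weight r = (\<bar>\<xi> r\<bar> + 2 * pi + 1) * hm m (r/s0) * r"

lemma lipschitz_weight_integrable: "set_integrable lborel {0<..} lipschitz_weight"
proof -
  have "set_integrable lborel {0<..}
      (\<lambda>r. \<bar>\<xi> r * hm m (r/s0) * r\<bar> + (2 * pi + 1) * (hm m (r/s0) * r))"
    using \<xi>_pairing_integrable_and_bound(1)[OF s0_pos] hm_scaled_mult_integrable[OF m_ge_4 s0_pos]
    by (intro set_integral_add(1) set_integrable_abs set_integrable_mult_right)
  then show ?thesis
  proof (rule set_integrable_cong[THEN iffD1, OF refl refl, rotated])
    fix r :: real
    assume "r \<in> {0<..}"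
    then show "\<bar>\<xi> r * hm m (r/s0) * r\<bar> + (2 * pi + 1) * (hm m (r/s0) * r) = lipschitz_weight r"
      using hm_nonneg[of "r/s0" m] s0_pos by (simp add: lipschitz_weight_def abs_mult algebra_simps)
  qed
qed

lemma defect_lipschitz:
  assumes s1: "s0/2 \<le> s1" "s1 \<le> 2 * s0" and s2: "s0/2 \<le> s2" "s2 \<le> 2 * s0"
  shows "\<bar>defect s1 - defect s2\<bar>
    \<le> (2 * real m * 8^m / s0 * (LINT r:{0<..}|lborel. lipschitz_weight r)) * \<bar>s1 - s2\<bar>"
proof -
  define D where "D = 2 * real m * 8^m / s0"
  have pos: "0 < s1" "0 < s2" using s1 s2 s0_pos by auto
  note integrable = defect_split(1)[OF pos(1)] defect_split(1)[OF pos(2)]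
  have pointwise: "\<bar>remainder s1 r * hs m s1 r * r - remainder s2 r * hs m s2 r * r\<bar>
      \<le> (\<bar>s1 - s2\<bar> * D) * lipschitz_weight r" if "r \<in> {0<..}" for r
  proof -
    have r: "0 < r" using that by simp
    have "remainder s1 r * hs m s1 r * r - remainder s2 r * hs m s2 r * r
        = ((\<xi> r + Qm m (r/s0) - Qm m (r/s1)) * (hm m (r/s1) - hm m (r/s2))
          - (Qm m (r/s1) - Qm m (r/s2)) * hm m (r/s2)) * r"
      by (simp add: remainder_def Qs_def hs_def algebra_simps)
    also have "\<bar>\<dots>\<bar> \<le> (\<bar>\<xi> r\<bar> + 2 * pi + 1) * (\<bar>s1 - s2\<bar> * D * hm m (r/s0)) * r"
    proof (rule abs_product_difference_le)
      show "\<bar>\<xi> r + Qm m (r/s0) - Qm m (r/s1)\<bar> \<le> \<bar>\<xi> r\<bar> + 2 * pi"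
        using abs_Qm_diff_le[of m "r/s0" "r/s1"] by linarith
      show "\<bar>hm m (r/s1) - hm m (r/s2)\<bar> \<le> \<bar>s1 - s2\<bar> * D * hm m (r/s0)"
        unfolding D_def by (rule hm_scale_lipschitz[OF s0_pos r s1 s2])
      show "\<bar>Qm m (r/s1) - Qm m (r/s2)\<bar> \<le> \<bar>s1 - s2\<bar> * D * hm m (r/s0)"
        unfolding D_def by (rule Qm_scale_lipschitz[OF s0_pos r s1 s2])
      show "0 \<le> hm m (r/s2)" using hm_nonneg[of "r/s2" m] r pos by simp
    qed (use r hm_le_1 in auto)
    finally show ?thesis by (simp add: lipschitz_weight_def mult_ac)
  qed
  have "\<bar>defect s1 - defect s2\<bar>
      = \<bar>LINT r:{0<..}|lborel. remainder s1 r * hs m s1 r * r - remainder s2 r * hs m s2 r * r\<bar>"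
    unfolding defect_def L2r_inner_def using set_integral_diff(2)[OF integrable] by simp
  also have "\<dots> \<le> (LINT r:{0<..}|lborel. (\<bar>s1 - s2\<bar> * D) * lipschitz_weight r)"
    using pointwise lipschitz_weight_integrable
    by (intro set_integral_abs_le set_integral_diff(1)[OF integrable] set_integrable_mult_right)
  also have "\<dots> = (D * (LINT r:{0<..}|lborel. lipschitz_weight r)) * \<bar>s1 - s2\<bar>" by (simp add: mult_ac)
  finally show ?thesis by (simp add: D_def)
qed

lemma defect_continuous_on: "continuous_on {s0/2 .. 2 * s0} defect"
proof (rule lipschitz_on_continuous_on)
  have "0 \<le> (LINT r:{0<..}|lborel. lipschitz_weight r)"
    using hm_nonneg s0_pos by (intro set_integral_nonneg_real) (simp add: lipschitz_weight_def)
  with s0_pos defect_lipschitz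
  show "(2 * real m * 8^m / s0 * (LINT r:{0<..}|lborel. lipschitz_weight r))-lipschitz_on
      {s0/2 .. 2 * s0} defect"
    unfolding lipschitz_on_def by (auto simp: dist_real_def)
qed


lemma profile_gap_has_derivative:
  assumes "0 < r" "0 < s"
  shows "(profile_gap s has_real_derivative profile_gap_deriv s r) (at r)"
proof -
  have "((\<lambda>r. Qm m (r/s0) - Qm m (r/s)) has_real_derivative
      - (real m * hm m (r/s0) / r) - - (real m * hm m (r/s) / r)) (at r)"
    using assms s0_pos by (intro DERIV_diff DERIV_Qm_radial) auto
  then show ?thesis by (simp add: profile_gap_def[abs_def] profile_gap_deriv_def diff_divide_distrib algebra_simps)
qed

lemma profile_gap_density_le:
  assumes s: "s0/2 \<le> s" "s \<le> 2 * s0" and r: "0 < r"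
  shows "\<bar>X2_density m (profile_gap s) (profile_gap_deriv s) r\<bar>
    \<le> (16 * (real m)^2 * (s - s0)^2 * (2 * real m * 8^m / s0)^2 / s0) * cauchy_weight (r/s0)"
proof -
  define D where "D = 2 * real m * 8^m / s0"
  define c where "c = \<bar>s - s0\<bar> * D * hm m (r/s0)"
  have s00: "s0/2 \<le> s0" "s0 \<le> 2 * s0" using s0_pos by auto
  have gap: "\<bar>profile_gap s r\<bar> \<le> c"
    using Qm_scale_lipschitz[OF s0_pos r s00 s, of m]
    by (simp add: profile_gap_def c_def D_def abs_minus_commute)
  have "\<bar>hm m (r/s) - hm m (r/s0)\<bar> \<le> c"
    using hm_scale_lipschitz[OF s0_pos r s s00, of m] by (simp add: c_def D_def)
  then have deriv: "\<bar>profile_gap_deriv s r\<bar> \<le> real m * c / r"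
    using r by (simp add: profile_gap_deriv_def abs_mult divide_right_mono mult_left_mono)
  have "X2_density m (profile_gap s) (profile_gap_deriv s) r
      \<le> ((real m * c / r)^2 + (real m)^2 * c^2 / r^2) * r"
    unfolding X2_density_def using r gap deriv
    by (intro mult_right_mono add_mono divide_right_mono mult_left_mono)
      (auto simp: abs_le_square_iff[symmetric])
  also have "\<dots> = 2 * (real m)^2 * c^2 / r"
    using r by (simp add: field_simps power2_eq_square)
  also have "c^2 = (s - s0)^2 * D^2 * (hm m (r/s0))^2"
    by (simp add: c_def power_mult_distrib)
  also have "2 * (real m)^2 * ((s - s0)^2 * D^2 * (hm m (r/s0))^2) / r
      = 2 * (real m)^2 * (s - s0)^2 * D^2 * ((hm m (r/s0))^2 / r)"
    by simp
  also have "\<dots> \<le> 2 * (real m)^2 * (s - s0)^2 * D^2 * (8 / s0 * cauchy_weight (r/s0))"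
  proof (rule mult_left_mono)
    have "(hm m (r/s0))^2 / r = (hm m (r/s0))^2 / (r/s0) / s0" using s0_pos r by simp
    also have "\<dots> \<le> 8 * cauchy_weight (r/s0) / s0"
      using hm_sq_div_le_weight[OF m_ge_4, of "r/s0"] s0_pos r by (intro divide_right_mono) auto
    finally show "(hm m (r/s0))^2 / r \<le> 8 / s0 * cauchy_weight (r/s0)" by simp
  qed simp
  finally show ?thesis
    using X2_density_nonneg[OF r] by (simp add: D_def mult_ac)
qed

lemma profile_gap_X2_deriv:
  assumes s: "s0/2 \<le> s" "s \<le> 2 * s0"
  shows "X2_deriv m (profile_gap s) (profile_gap_deriv s)"
    "(LINT r:{0<..}|lborel. X2_density m (profile_gap s) (profile_gap_deriv s) r)
      \<le> scale_energy_const m * ((s - s0)/s0)^2"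
proof -
  have sp: "0 < s" using s s0_pos by simp
  have cont: "continuous_on S (profile_gap_deriv s)" if "0 \<notin> S" for S
    unfolding profile_gap_deriv_def[abs_def] using that sp s0_pos
    by (intro continuous_intros continuous_on_hm_scaled) auto
  have ftc: "set_integrable lborel {a..b} (profile_gap_deriv s)
      \<and> profile_gap s b - profile_gap s a = (LINT r:{a..b}|lborel. profile_gap_deriv s r)"
    if "0 < a" "a \<le> b" for a b
  proof
    have c: "continuous_on {a..b} (profile_gap_deriv s)" using that by (intro cont) auto
    show "set_integrable lborel {a..b} (profile_gap_deriv s)"
      by (rule borel_integrable_atLeastAtMost'[OF c])
    have "(LINT r:{a..b}|lborel. profile_gap_deriv s r) = profile_gap s b - profile_gap s a"
      unfolding set_lebesgue_integral_def
      using that profile_gap_has_derivative[OF _ sp]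
      by (intro integral_FTC_atLeastAtMost[OF that(2) _ c])
        (auto simp: has_real_derivative_iff_has_vector_derivative[symmetric]
          intro: has_field_derivative_at_within)
    then show "profile_gap s b - profile_gap s a = (LINT r:{a..b}|lborel. profile_gap_deriv s r)" ..
  qed
  have density_cont: "continuous_on {0<..} (X2_density m (profile_gap s) (profile_gap_deriv s))"
    unfolding X2_density_def[abs_def] profile_gap_def
    using sp s0_pos by (intro continuous_intros cont continuous_on_Qm_scaled) auto
  note dominated = set_integrable_cauchy_dominated[OF s0_pos density_cont profile_gap_density_le[OF s]]
  show "X2_deriv m (profile_gap s) (profile_gap_deriv s)"
    using ftc dominated(1) by (simp add: X2_deriv_iff)
  have "(16 * (real m)^2 * (s - s0)^2 * (2 * real m * 8^m / s0)^2 / s0) * s0 * pi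
      = scale_energy_const m * ((s - s0)/s0)^2"
    using s0_pos by (simp add: scale_energy_const_def field_simps power2_eq_square power4_eq_xxxx
        power_mult_distrib[symmetric])
  with dominated(2) show "(LINT r:{0<..}|lborel. X2_density m (profile_gap s) (profile_gap_deriv s) r)
      \<le> scale_energy_const m * ((s - s0)/s0)^2" by simp
qed

lemma remainder_X2:
  assumes "s0/2 \<le> s" "s \<le> 2 * s0"
  shows "inX2 m (remainder s)"
    "X2_norm m (remainder s) \<le> sqrt (2 * energy + 2 * scale_energy_const m * ((s - s0)/s0)^2)"
proof -
  have eq: "remainder s = (\<lambda>r. \<xi> r + profile_gap s r)" by (simp add: remainder_eq[abs_def])
  note sum = X2_deriv_add[OF \<xi>_deriv profile_gap_X2_deriv(1)[OF assms]]
  show "inX2 m (remainder s)" unfolding eq inX2_def using sum(1) by blast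
  show "X2_norm m (remainder s) \<le> sqrt (2 * energy + 2 * scale_energy_const m * ((s - s0)/s0)^2)"
    unfolding eq X2_norm_eq[OF sum(1)] energy_def
    using sum(2) profile_gap_X2_deriv(2)[OF assms] by simp
qed


lemma abs_\<xi>_pairing_le_near:
  assumes "s0/2 \<le> s" "s \<le> 2 * s0"
  shows "\<bar>\<xi>_pairing s\<bar> \<le> 24 * s0^2 * sqrt energy"
proof -
  have "\<bar>\<xi>_pairing s\<bar> \<le> 6 * s^2 * sqrt energy"
    using \<xi>_pairing_integrable_and_bound(2) assms s0_pos by simp
  also have "\<dots> \<le> 6 * (2 * s0)^2 * sqrt energy"
    using assms s0_pos energy_nonneg by (intro mult_right_mono mult_left_mono power_mono) auto
  finally show ?thesis by (simp add: power_mult_distrib)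
qed

text \<open>For \<open>\<delta> \<sim> \<parallel>\<xi>\<parallel>\<close> the coercive part dominates the \<open>\<xi>\<close>-part at \<open>s0 (1 \<plusminus> \<delta>)\<close>,
  so the defect changes sign there.\<close>

lemma exists_orthogonal_scale:
  assumes small: "48 * sqrt energy / coercivity_const m \<le> 1/2"
  obtains s where "s0/2 \<le> s" "s \<le> 2 * s0"
    "\<bar>s / s0 - 1\<bar> \<le> 48 * sqrt energy / coercivity_const m" "defect s = 0"
proof -
  define \<delta> where "\<delta> = 48 * sqrt energy / coercivity_const m"
  have c: "0 < coercivity_const m" using m_ge_4 by (simp add: coercivity_const_def)
  have \<delta>: "0 \<le> \<delta>" "\<delta> \<le> 1/2" using small c energy_nonneg by (simp_all add: \<delta>_def)
  have c\<delta>: "coercivity_const m * s0 * (s0 * \<delta>) = 48 * s0^2 * sqrt energy"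
    using c by (simp add: \<delta>_def power2_eq_square)
  define s1 where "s1 = s0 - s0 * \<delta>"
  define s2 where "s2 = s0 + s0 * \<delta>"
  have "0 \<le> s0 * \<delta>" "s0 * \<delta> \<le> s0 * (1/2)" using \<delta> s0_pos by (simp_all add: mult_left_mono)
  then have s1: "s0/2 \<le> s1" "s1 \<le> 2 * s0" and s2: "s0/2 \<le> s2" "s2 \<le> 2 * s0"
    using s0_pos unfolding s1_def s2_def by linarith+
  have "\<exists>s. s1 \<le> s \<and> s \<le> s2 \<and> defect s = 0"
  proof (cases "\<delta> = 0")
    case True
    then have "energy = 0" using c by (simp add: \<delta>_def)
    then have "defect s0 = 0"
      using abs_\<xi>_pairing_le_near[of s0] defect_split(2)[OF s0_pos] s0_pos
      by (simp add: profile_pairing_def)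
    then show ?thesis using True by (auto simp: s1_def s2_def)
  next
    case False
    then have "0 < \<delta>" using \<delta> by simp
    then have "s1 < s0" "s0 < s2" using s0_pos by (simp_all add: s1_def s2_def)
    then have "48 * s0^2 * sqrt energy \<le> profile_pairing s1"
      "profile_pairing s2 \<le> - (48 * s0^2 * sqrt energy)"
      using profile_pairing_sign(2)[OF s1] profile_pairing_sign(1)[OF s2] c\<delta>
      by (simp_all add: s1_def s2_def algebra_simps)
    then have "defect s2 \<le> 0" "0 \<le> defect s1"
      using defect_split(2) abs_\<xi>_pairing_le_near[OF s1] abs_\<xi>_pairing_le_near[OF s2] s1 s2 s0_pos
      by (auto simp: abs_le_iff)
    moreover have "continuous_on {s1..s2} defect"
      using s1 s2 by (intro continuous_on_subset[OF defect_continuous_on]) auto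
    ultimately show ?thesis using \<open>s1 < s0\<close> \<open>s0 < s2\<close> by (intro IVT2') auto
  qed
  then obtain s where s: "s1 \<le> s" "s \<le> s2" "defect s = 0" by blast
  then have "\<bar>s - s0\<bar> \<le> s0 * \<delta>" by (simp add: s1_def s2_def abs_le_iff algebra_simps)
  moreover have "s / s0 - 1 = (s - s0) / s0" using s0_pos by (simp add: field_simps)
  ultimately have "\<bar>s / s0 - 1\<bar> \<le> \<delta>"
    using s0_pos by (simp add: abs_divide pos_divide_le_eq mult.commute)
  with s s1 s2 show ?thesis by (intro that) (auto simp: \<delta>_def)
qed

lemma modulation_estimate:
  assumes small: "X2_norm m \<xi> \<le> coercivity_const m / 96"
  shows "\<exists>s > 0. \<exists>\<xi>t. inX2 m \<xi>t \<and>
              (\<forall>r > 0. Qs m s0 r + \<xi> r = Qs m s r + \<xi>t r) \<and>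
              L2r_inner \<xi>t (hs m s) = 0 \<and>
              \<bar>s / s0 - 1\<bar> + X2_norm m \<xi>t \<le> modulation_const m * X2_norm m \<xi>"
proof -
  define c where "c = coercivity_const m"
  define K where "K = scale_energy_const m"
  define N where "N = X2_norm m \<xi>"
  define \<delta> where "\<delta> = 48 * N / c"
  have c: "0 < c" using m_ge_4 by (simp add: c_def coercivity_const_def)
  have N: "N = sqrt energy" "0 \<le> N" "energy = N^2"
    using X2_norm_\<xi> energy_nonneg by (auto simp: N_def)
  obtain s where s: "s0/2 \<le> s" "s \<le> 2 * s0" and rel: "\<bar>s / s0 - 1\<bar> \<le> \<delta>"
    and zero: "defect s = 0"
    using exists_orthogonal_scale small c by (auto simp: \<delta>_def c_def N_def X2_norm_\<xi> field_simps)
  have "s / s0 - 1 = (s - s0) / s0" using s0_pos by (simp add: field_simps)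
  then have "((s - s0)/s0)^2 \<le> \<delta>^2"
    using rel power2_abs[of "(s - s0)/s0"] power_mono[of "\<bar>(s - s0)/s0\<bar>" \<delta> 2] by simp
  moreover have "0 \<le> K" by (simp add: K_def scale_energy_const_def)
  ultimately have "2 * N^2 + 2 * K * ((s - s0)/s0)^2 \<le> 2 * N^2 + 2 * (K * \<delta>^2)"
    by (simp add: mult_left_mono)
  then have "X2_norm m (remainder s) \<le> sqrt (2 * N^2 + 2 * (K * \<delta>^2))"
    using remainder_X2(2)[OF s, unfolded N(3)] unfolding K_def by (meson order_trans real_sqrt_le_mono)
  also have "2 * N^2 + 2 * (K * \<delta>^2) = (2 + 2 * K * (48 / c)^2) * N^2"
    using c by (simp add: \<delta>_def field_simps power2_eq_square)
  also have "sqrt \<dots> = sqrt (2 + 2 * K * (48 / c)^2) * N"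
    using N(2) by (simp add: real_sqrt_mult)
  finally have "\<bar>s / s0 - 1\<bar> + X2_norm m (remainder s) \<le> modulation_const m * N"
    using rel by (simp add: modulation_const_def c_def K_def \<delta>_def distrib_right)
  moreover have "\<forall>r > 0. Qs m s0 r + \<xi> r = Qs m s r + remainder s r" by (simp add: remainder_def)
  moreover have "L2r_inner (remainder s) (hs m s) = 0" using zero by (simp add: defect_def)
  moreover have "0 < s" using s s0_pos by linarith
  ultimately show ?thesis using remainder_X2(1)[OF s] unfolding N_def by blast
qed

end

theorem lemma3p6:
  fixes m :: nat
  assumes "m \<ge> 4"
  shows "\<exists>\<epsilon>0 > 0. \<exists>C > 0. \<forall>s0 > 0. \<forall>\<xi>.
           inX2 m \<xi> \<and> X2_norm m \<xi> \<le> \<epsilon>0 \<longrightarrow>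
           (\<exists>s > 0. \<exists>\<xi>t. inX2 m \<xi>t \<and>
              (\<forall>r > 0. Qs m s0 r + \<xi> r = Qs m s r + \<xi>t r) \<and>
              L2r_inner \<xi>t (hs m s) = 0 \<and>
              \<bar>s / s0 - 1\<bar> + X2_norm m \<xi>t \<le> C * X2_norm m \<xi>)"
proof -
  have "0 < coercivity_const m" using assms by (simp add: coercivity_const_def)
  moreover have "0 \<le> scale_energy_const m" by (simp add: scale_energy_const_def)
  ultimately have "0 < coercivity_const m / 96" "0 < modulation_const m"
    by (simp_all add: modulation_const_def add_pos_nonneg)
  moreover have "\<forall>s0 > 0. \<forall>\<xi>. inX2 m \<xi> \<and> X2_norm m \<xi> \<le> coercivity_const m / 96 \<longrightarrow>
      (\<exists>s > 0. \<exists>\<xi>t. inX2 m \<xi>t \<and> (\<forall>r > 0. Qs m s0 r + \<xi> r = Qs m s r + \<xi>t r) \<and>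
        L2r_inner \<xi>t (hs m s) = 0 \<and> \<bar>s / s0 - 1\<bar> + X2_norm m \<xi>t \<le> modulation_const m * X2_norm m \<xi>)"
  proof (intro allI impI)
    fix s0 :: real and \<xi> :: "real \<Rightarrow> real"
    assume "0 < s0" and \<xi>: "inX2 m \<xi> \<and> X2_norm m \<xi> \<le> coercivity_const m / 96"
    then obtain \<xi>' where "X2_deriv m \<xi> \<xi>'" by (auto simp: inX2_def)
    with assms \<open>0 < s0\<close> interpret modulation m s0 \<xi> \<xi>' by unfold_locales
    show "\<exists>s > 0. \<exists>\<xi>t. inX2 m \<xi>t \<and> (\<forall>r > 0. Qs m s0 r + \<xi> r = Qs m s r + \<xi>t r) \<and>
        L2r_inner \<xi>t (hs m s) = 0 \<and> \<bar>s / s0 - 1\<bar> + X2_norm m \<xi>t \<le> modulation_const m * X2_norm m \<xi>"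
      using \<xi> by (intro modulation_estimate) simp
  qed
  ultimately show ?thesis by blast
qed

end
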